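(* There is no semi-equivelar map of type $(3^4,8)$ (four triangles and one octagon around each vertex, in this cyclic order) on the closed surface of Euler characteristic $-1$. *)

theory Defs
  imports Main
begin

text \<open>Combinatorial (polyhedral) maps on closed surfaces.
  A face is a polygon, given by a list of pairwise distinct vertices (length at least 3)
  read cyclically.  A map is a finite set of faces.\<close>

definition poly_edges :: "'a list \<Rightarrow> 'a set set" where
  "poly_edges f = {{f ! i, f ! (Suc i mod length f)} | i. i < length f}"

definition map_vertices :: "'a list set \<Rightarrow> 'a set" where
  "map_vertices F = (\<Union>f\<in>F. set f)"

definition map_edges :: "'a list set \<Rightarrow> 'a set set" where
  "map_edges F = (\<Union>f\<in>F. poly_edges f)"

definition faces_at :: "'a list set \<Rightarrow> 'a \<Rightarrow> 'a list set" where
  "faces_at F v = {f\<in>F. v \<in> set f}"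

definition adj_at :: "'a list set \<Rightarrow> 'a \<Rightarrow> 'a list \<Rightarrow> 'a list \<Rightarrow> bool" where
  "adj_at F v f g \<longleftrightarrow> f \<in> faces_at F v \<and> g \<in> faces_at F v \<and> f \<noteq> g \<and>
     (\<exists>e\<in>poly_edges f \<inter> poly_edges g. v \<in> e)"

definition face_adj :: "'a list set \<Rightarrow> 'a list \<Rightarrow> 'a list \<Rightarrow> bool" where
  "face_adj F f g \<longleftrightarrow> f \<in> F \<and> g \<in> F \<and> f \<noteq> g \<and> poly_edges f \<inter> poly_edges g \<noteq> {}"

definition polyhedral_map :: "'a list set \<Rightarrow> bool" where
  "polyhedral_map F \<longleftrightarrow>
     finite F \<and> F \<noteq> {} \<and>
     (\<forall>f\<in>F. distinct f \<and> length f \<ge> 3) \<and>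
     (\<forall>f\<in>F. \<forall>g\<in>F. f \<noteq> g \<longrightarrow>
         set f \<inter> set g = {} \<or> card (set f \<inter> set g) = 1 \<or>
         set f \<inter> set g \<in> poly_edges f \<inter> poly_edges g) \<and>
     (\<forall>e\<in>map_edges F. card {f\<in>F. e \<in> poly_edges f} = 2) \<and>
     (\<forall>v\<in>map_vertices F. \<forall>f\<in>faces_at F v. \<forall>g\<in>faces_at F v. (adj_at F v)\<^sup>*\<^sup>* f g) \<and>
     (\<forall>f\<in>F. \<forall>g\<in>F. (face_adj F)\<^sup>*\<^sup>* f g)"

definition euler_char :: "'a list set \<Rightarrow> int" where
  "euler_char F = int (card (map_vertices F)) - int (card (map_edges F)) + int (card F)"

definition vertex_type :: "'a list set \<Rightarrow> 'a \<Rightarrow> nat list \<Rightarrow> bool" where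
  "vertex_type F v t \<longleftrightarrow>
     (\<exists>fs. distinct fs \<and> set fs = faces_at F v \<and> length fs = length t \<and>
        (\<forall>i<length fs. \<exists>e\<in>poly_edges (fs ! i) \<inter> poly_edges (fs ! (Suc i mod length fs)). v \<in> e) \<and>
        (\<exists>k. rotate k (map length fs) = t \<or> rotate k (rev (map length fs)) = t))"

definition semi_equivelar :: "'a list set \<Rightarrow> nat list \<Rightarrow> bool" where
  "semi_equivelar F t \<longleftrightarrow> polyhedral_map F \<and> (\<forall>v\<in>map_vertices F. vertex_type F v t)"

end

theory Submission
  imports Defs "HOL-Library.Multiset"
begin

lemma mod_length_less: "i < length xs \<Longrightarrow> k mod length xs < length xs"
  by (intro mod_less_divisor) (cases xs, auto)

lemma cyclic_chain_rotate:
  assumes "\<forall>i<length xs. R (xs ! i) (xs ! (Suc i mod length xs))"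
  shows "\<forall>i<length xs. R (rotate k xs ! i) (rotate k xs ! (Suc i mod length xs))"
proof (intro allI impI)
  fix i assume i: "i < length xs"
  let ?j = "(k + i) mod length xs"
  have "(k + Suc i mod length xs) mod length xs = Suc ?j mod length xs"
    by (simp add: mod_Suc_eq mod_add_right_eq)
  then show "R (rotate k xs ! i) (rotate k xs ! (Suc i mod length xs))"
    using assms mod_length_less[OF i] i by (simp add: nth_rotate mod_length_less)
qed

lemma mset_rotate: "mset (rotate n xs) = mset xs"
  by (metis append_take_drop_id mset_append rotate_drop_take union_commute)

lemma periodic_int_mod:
  fixes f :: "int \<Rightarrow> 'b"
  assumes "\<And>i. f (i + n) = f i"
  shows "f i = f (i mod n)"
proof -
  have "f (j + n * k) = f j" for j k
  proof (induction k arbitrary: j rule: int_induct[where k = 0])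
    case (step1 k)
    then show ?case using assms[of "j + n * k"] by (simp add: algebra_simps)
  next
    case (step2 k)
    then show ?case using assms[of "j + n * (k - 1)"] by (simp add: algebra_simps)
  qed simp
  from this[of "i mod n" "i div n"] show ?thesis by simp
qed

lemma periodic_int_mod_eq:
  fixes f :: "int \<Rightarrow> 'b"
  assumes "\<And>i. f (i + n) = f i" "i mod n = j mod n"
  shows "f i = f j"
  using periodic_int_mod[of f n] assms by metis

lemma periodic_int_propagate:
  fixes P :: "int \<Rightarrow> bool"
  assumes periodic: "\<And>i. P (i + n) = P i" and step: "\<And>i. P i \<Longrightarrow> P (i + 1)"
    and "P i" "0 < n"
  shows "P j"
proof -
  have "P (i + int k)" for k
  proof (induction k)
    case (Suc k)
    then show ?case using step[of "i + int k"] by (simp add: algebra_simps)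
  qed (simp add: \<open>P i\<close>)
  from this[of "nat ((j - i) mod n)"] have "P (i + (j - i) mod n)" using \<open>0 < n\<close> by simp
  moreover have "(i + (j - i) mod n) mod n = j mod n" by (simp add: mod_add_right_eq)
  ultimately show ?thesis using periodic_int_mod_eq[of P n, OF periodic] by metis
qed

lemma double_counting:
  assumes "finite X" "finite Y"
  shows "(\<Sum>a\<in>X. card {b \<in> Y. R a b}) = (\<Sum>b\<in>Y. card {a \<in> X. R a b})"
proof -
  have "(\<Sum>a\<in>X. card {b \<in> Y. R a b}) = (\<Sum>a\<in>X. \<Sum>b\<in>Y. if R a b then 1 else 0)"
    using assms by (simp add: sum.inter_filter[symmetric])
  also have "\<dots> = (\<Sum>b\<in>Y. \<Sum>a\<in>X. if R a b then 1 else 0)" by (rule sum.swap)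
  also have "\<dots> = (\<Sum>b\<in>Y. card {a \<in> X. R a b})" using assms by (simp add: sum.inter_filter[symmetric])
  finally show ?thesis .
qed

lemma triple_eq_cases:
  assumes "distinct [v, a, b]" "distinct [v, c, d]" "{v, a, b} = {v, c, d}"
  shows "(a = c \<and> b = d) \<or> (a = d \<and> b = c)"
proof -
  have "{a, b} = {v, a, b} - {v}" "{c, d} = {v, c, d} - {v}" using assms(1,2) by auto
  then have "{a, b} = {c, d}" using assms(3) by simp
  then show ?thesis by (simp add: doubleton_eq_iff)
qed

lemma poly_edges_conv_image:
  "poly_edges f = (\<lambda>i. {f ! i, f ! (Suc i mod length f)}) ` {..<length f}"
  unfolding poly_edges_def by auto

lemma nth_edge_in_poly_edges:
  "i < length f \<Longrightarrow> {f ! i, f ! (Suc i mod length f)} \<in> poly_edges f"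
  unfolding poly_edges_def by blast

lemma poly_edges_subset_set: "e \<in> poly_edges f \<Longrightarrow> e \<subseteq> set f"
  unfolding poly_edges_def by (auto intro!: nth_mem mod_length_less)

lemma finite_poly_edges: "finite (poly_edges f)"
  unfolding poly_edges_conv_image by simp

lemma poly_edges_at_nth:
  assumes "distinct f" "j < length f"
  shows "{e \<in> poly_edges f. f ! j \<in> e} =
    {{f ! j, f ! (Suc j mod length f)}, {f ! j, f ! ((j + length f - 1) mod length f)}}"
proof -
  let ?n = "length f"
  have idx: "f ! a = f ! b \<longleftrightarrow> a = b" if "a < ?n" "b < ?n" for a b
    using nth_eq_iff_index_eq[OF assms(1) that] .
  have pred: "(j + ?n - 1) mod ?n < ?n" "Suc ((j + ?n - 1) mod ?n) mod ?n = j"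
  proof -
    show "(j + ?n - 1) mod ?n < ?n" using assms(2) by (rule mod_length_less)
    show "Suc ((j + ?n - 1) mod ?n) mod ?n = j"
    proof (cases j)
      case 0 then show ?thesis using assms(2) by simp
    next
      case (Suc k)
      then have "(j + ?n - 1) mod ?n = k" using assms(2) by simp
      then show ?thesis using Suc assms(2) by simp
    qed
  qed
  show ?thesis
  proof (intro equalityI subsetI)
    fix e assume "e \<in> {e \<in> poly_edges f. f ! j \<in> e}"
    then obtain i where i: "i < ?n" "e = {f ! i, f ! (Suc i mod ?n)}" "f ! j \<in> e"
      unfolding poly_edges_def by blast
    then consider "j = i" | "j = Suc i mod ?n"
      using idx assms(2) by (metis empty_iff insertE mod_less_divisor gr_zeroI less_zeroE)
    then show "e \<in> {{f ! j, f ! (Suc j mod ?n)}, {f ! j, f ! ((j + ?n - 1) mod ?n)}}"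
    proof cases
      case 2
      then have "(j + ?n - 1) mod ?n = i"
      proof (cases "Suc i < ?n")
        case False
        then have "Suc i = ?n" using i(1) by simp
        then show ?thesis using 2 by simp
      qed simp
      then show ?thesis using i(2) 2 by (auto simp: insert_commute)
    qed (use i in simp)
  next
    fix e assume "e \<in> {{f ! j, f ! (Suc j mod ?n)}, {f ! j, f ! ((j + ?n - 1) mod ?n)}}"
    moreover have "{f ! j, f ! ((j + ?n - 1) mod ?n)} \<in> poly_edges f"
      using nth_edge_in_poly_edges[OF pred(1)] unfolding pred(2) by (simp add: insert_commute)
    ultimately show "e \<in> {e \<in> poly_edges f. f ! j \<in> e}"
      using nth_edge_in_poly_edges[OF assms(2)] by auto
  qed
qed

lemma poly_edges_at_vertex:
  assumes "distinct f" "3 \<le> length f" "v \<in> set f"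
  obtains a b where "a \<noteq> b" "a \<noteq> v" "b \<noteq> v" "a \<in> set f" "b \<in> set f"
    "{e \<in> poly_edges f. v \<in> e} = {{v, a}, {v, b}}"
proof -
  let ?n = "length f"
  obtain j where j: "j < ?n" "f ! j = v" using assms(3) by (metis in_set_conv_nth)
  let ?s = "Suc j mod ?n" and ?p = "(j + ?n - 1) mod ?n"
  have s: "?s = (if Suc j = ?n then 0 else Suc j)" using j(1) by (simp add: mod_Suc)
  have p: "?p = (if j = 0 then ?n - 1 else j - 1)"
    using j(1) by (cases j) (simp_all add: mod_if)
  have "?s \<noteq> ?p" "?s \<noteq> j" "?p \<noteq> j"
    unfolding s p using j(1) assms(2) by auto
  moreover have idx: "?s < ?n" "?p < ?n" using j(1) by (auto intro: mod_length_less)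
  ultimately have "f ! ?s \<noteq> f ! ?p" "f ! ?s \<noteq> v" "f ! ?p \<noteq> v"
    using nth_eq_iff_index_eq[OF assms(1)] j by metis+
  moreover have "f ! ?s \<in> set f" "f ! ?p \<in> set f" using idx by simp_all
  ultimately show thesis
    using that poly_edges_at_nth[OF assms(1) j(1)] unfolding j(2) by blast
qed

lemma card_poly_edge:
  assumes "distinct f" "2 \<le> length f" "e \<in> poly_edges f"
  shows "card e = 2"
proof -
  obtain i where i: "i < length f" "e = {f ! i, f ! (Suc i mod length f)}"
    using assms(3) unfolding poly_edges_def by blast
  have "Suc i mod length f \<noteq> i" using i(1) assms(2) by (simp add: mod_Suc)
  then have "f ! i \<noteq> f ! (Suc i mod length f)"
    using nth_eq_iff_index_eq[OF assms(1) i(1) mod_length_less[OF i(1)]] by metis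
  then show ?thesis using i(2) by simp
qed

text \<open>Every edge has two ends and every vertex lies on two edges.\<close>
lemma card_poly_edges:
  assumes "distinct f" "3 \<le> length f"
  shows "card (poly_edges f) = length f"
proof -
  have "{v \<in> set f. v \<in> e} = e" if "e \<in> poly_edges f" for e
    using poly_edges_subset_set[OF that] by blast
  then have "(\<Sum>e\<in>poly_edges f. card {v \<in> set f. v \<in> e}) = (\<Sum>e\<in>poly_edges f. 2)"
    using card_poly_edge[OF assms(1)] assms(2) by (intro sum.cong) simp_all
  then have "2 * card (poly_edges f) = (\<Sum>e\<in>poly_edges f. card {v \<in> set f. v \<in> e})"
    by simp
  also have "\<dots> = (\<Sum>v\<in>set f. card {e \<in> poly_edges f. v \<in> e})"
    by (rule double_counting) (simp_all add: finite_poly_edges)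
  also have "\<dots> = (\<Sum>v\<in>set f. 2)"
  proof (rule sum.cong)
    fix v assume "v \<in> set f"
    then obtain a b where "a \<noteq> b" "{e \<in> poly_edges f. v \<in> e} = {{v, a}, {v, b}}"
      using poly_edges_at_vertex[OF assms] by metis
    then show "card {e \<in> poly_edges f. v \<in> e} = 2" by (simp add: doubleton_eq_iff)
  qed simp
  finally show ?thesis using distinct_card[OF assms(1)] by simp
qed

lemma edge_through_vertex:
  assumes "distinct f" "3 \<le> length f" "e \<in> poly_edges f" "v \<in> e"
  obtains y where "y \<in> set f" "y \<noteq> v" "e = {v, y}"
proof -
  have "card e = 2" using card_poly_edge assms by fastforce
  then obtain y where "y \<noteq> v" "e = {v, y}" using assms(4)
    by (metis card_2_iff insert_commute insertE singletonD)
  then show thesis using that poly_edges_subset_set[OF assms(3)] by blast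
qed

lemma edges_at_vertex_eq:
  assumes "distinct f" "3 \<le> length f" "{v, a} \<in> poly_edges f" "{v, b} \<in> poly_edges f" "a \<noteq> b"
  shows "{e \<in> poly_edges f. v \<in> e} = {{v, a}, {v, b}}"
proof -
  have "v \<in> set f" using poly_edges_subset_set[OF assms(3)] by blast
  then obtain a' b' where "a' \<noteq> v" "b' \<noteq> v"
    and E: "{e \<in> poly_edges f. v \<in> e} = {{v, a'}, {v, b'}}"
    using poly_edges_at_vertex[OF assms(1,2)] by metis
  moreover have "{v, a} \<in> {{v, a'}, {v, b'}}" "{v, b} \<in> {{v, a'}, {v, b'}}"
    using assms(3,4) unfolding E[symmetric] by simp_all
  ultimately have "a \<in> {a', b'}" "b \<in> {a', b'}" by (auto simp: doubleton_eq_iff)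
  then have "(a = a' \<and> b = b') \<or> (a = b' \<and> b = a')" using assms(5) by blast
  then show ?thesis unfolding E by (auto simp: insert_commute)
qed

lemma triangle_set_eq:
  assumes "distinct T" "length T = 3" "distinct [v, a, b]" "{v, a, b} \<subseteq> set T"
  shows "set T = {v, a, b}"
  using assms by (intro card_subset_eq[symmetric]) (simp_all add: distinct_card)

locale polyhedral =
  fixes F :: "'a list set"
  assumes polyhedral: "polyhedral_map F"
begin

lemma finite_faces: "finite F"
  using polyhedral unfolding polyhedral_map_def by blast

lemma face_distinct: "f \<in> F \<Longrightarrow> distinct f"
  using polyhedral unfolding polyhedral_map_def by blast

lemma face_length: "f \<in> F \<Longrightarrow> 3 \<le> length f"
  using polyhedral unfolding polyhedral_map_def by blast

lemma faces_meet_properly: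
  "f \<in> F \<Longrightarrow> g \<in> F \<Longrightarrow> f \<noteq> g \<Longrightarrow>
    set f \<inter> set g = {} \<or> card (set f \<inter> set g) = 1 \<or> set f \<inter> set g \<in> poly_edges f \<inter> poly_edges g"
  using polyhedral unfolding polyhedral_map_def by blast

lemma card_faces_at_edge: "e \<in> map_edges F \<Longrightarrow> card {f \<in> F. e \<in> poly_edges f} = 2"
  using polyhedral unfolding polyhedral_map_def by blast

lemma finite_map_vertices: "finite (map_vertices F)"
  unfolding map_vertices_def using finite_faces by simp

lemma finite_map_edges: "finite (map_edges F)"
  unfolding map_edges_def using finite_faces finite_poly_edges by blast

lemma in_map_vertices: "f \<in> F \<Longrightarrow> v \<in> set f \<Longrightarrow> v \<in> map_vertices F"
  unfolding map_vertices_def by blast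

lemma no_edge_in_three_faces:
  assumes "f \<in> F" "g \<in> F" "h \<in> F" "distinct [f, g, h]"
    and "e \<in> poly_edges f" "e \<in> poly_edges g" "e \<in> poly_edges h"
  shows False
proof -
  have "e \<in> map_edges F" using assms unfolding map_edges_def by blast
  have "{f, g, h} \<subseteq> {f \<in> F. e \<in> poly_edges f}" using assms by auto
  then have "card {f, g, h} \<le> 2"
    using card_mono card_faces_at_edge[OF \<open>e \<in> map_edges F\<close>] finite_faces
    by (metis (no_types, lifting) finite_subset mem_Collect_eq subsetI)
  then show False using assms(4) by simp
qed

lemma card_face_inter_le_2:
  assumes "f \<in> F" "g \<in> F" "f \<noteq> g"
  shows "card (set f \<inter> set g) \<le> 2"
proof -
  have "card e = 2" if "e \<in> poly_edges f" for e
    using card_poly_edge[OF face_distinct[OF assms(1)] _ that] face_length[OF assms(1)] by simp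
  then show ?thesis using faces_meet_properly[OF assms] by fastforce
qed

lemma face_inter_doubleton_is_edge:
  assumes "f \<in> F" "g \<in> F" "f \<noteq> g" "a \<noteq> b" "set f \<inter> set g = {a, b}"
  shows "{a, b} \<in> poly_edges f"
  using faces_meet_properly[OF assms(1-3)] assms(4,5) by auto

lemma edge_count: "2 * card (map_edges F) = (\<Sum>f\<in>F. length f)"
proof -
  have "(\<Sum>e\<in>map_edges F. card {f \<in> F. e \<in> poly_edges f}) = (\<Sum>e\<in>map_edges F. 2)"
    using card_faces_at_edge by simp
  moreover have "card {e \<in> map_edges F. e \<in> poly_edges f} = length f" if "f \<in> F" for f
  proof -
    have "{e \<in> map_edges F. e \<in> poly_edges f} = poly_edges f"
      using that unfolding map_edges_def by auto
    then show ?thesis using that by (simp add: card_poly_edges face_distinct face_length)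
  qed
  then have "(\<Sum>f\<in>F. card {e \<in> map_edges F. e \<in> poly_edges f}) = (\<Sum>f\<in>F. length f)"
    by simp
  ultimately show ?thesis
    using double_counting[OF finite_faces finite_map_edges, of "\<lambda>f e. e \<in> poly_edges f"]
    by (simp add: mult.commute)
qed

end

definition link_3_4_8 ::
  "('a \<Rightarrow> 'a \<Rightarrow> bool) \<Rightarrow> ('a \<Rightarrow> 'a \<Rightarrow> 'a \<Rightarrow> bool) \<Rightarrow> ('a \<Rightarrow> 'a list) \<Rightarrow>
    'a \<Rightarrow> 'a \<Rightarrow> 'a \<Rightarrow> 'a \<Rightarrow> 'a \<Rightarrow> 'a \<Rightarrow> bool" where
  "link_3_4_8 oedge tri oct v p c1 c2 c3 q \<longleftrightarrow>
     distinct [v, p, c1, c2, c3, q] \<and> (\<forall>y. oedge v y \<longleftrightarrow> y = p \<or> y = q) \<and>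
     (\<forall>a b. tri v a b \<longleftrightarrow> (a = p \<and> b = c1) \<or> (a = c1 \<and> b = p) \<or> (a = c1 \<and> b = c2) \<or>
        (a = c2 \<and> b = c1) \<or> (a = c2 \<and> b = c3) \<or> (a = c3 \<and> b = c2) \<or> (a = c3 \<and> b = q) \<or>
        (a = q \<and> b = c3)) \<and>
     oct c1 \<noteq> oct v \<and> oct c2 \<noteq> oct v \<and> oct c3 \<noteq> oct v"

locale links_3_4_8 =
  fixes V :: "'a set" and oct :: "'a \<Rightarrow> 'a list" and oedge :: "'a \<Rightarrow> 'a \<Rightarrow> bool"
    and tri :: "'a \<Rightarrow> 'a \<Rightarrow> 'a \<Rightarrow> bool"
  assumes tri_swap12: "tri a b c \<Longrightarrow> tri b a c"
    and tri_swap23: "tri a b c \<Longrightarrow> tri a c b"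
    and oedge_sym: "oedge a b \<Longrightarrow> oedge b a"
    and oedge_same_oct: "oedge a b \<Longrightarrow> oct a = oct b"
    and tri_in_V: "tri a b c \<Longrightarrow> a \<in> V"
    and oedge_in_V: "oedge a b \<Longrightarrow> a \<in> V"
    and link_exists: "v \<in> V \<Longrightarrow> \<exists>p c1 c2 c3 q. link_3_4_8 oedge tri oct v p c1 c2 c3 q"
    and oct_at: "v \<in> V \<Longrightarrow> v \<in> set (oct v) \<and> distinct (oct v) \<and> length (oct v) = 8"
    and oct_member: "v \<in> V \<Longrightarrow> y \<in> set (oct v) \<Longrightarrow> y \<in> V \<and> oct y = oct v"
    and oct_cycle: "v \<in> V \<Longrightarrow> i < 8 \<Longrightarrow> oedge (oct v ! i) (oct v ! ((i + 1) mod 8))"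
    and finite_V: "finite V"
    and V_nonempty: "V \<noteq> {}"
begin

abbreviation "link \<equiv> link_3_4_8 oedge tri oct"

lemma tri_perms:
  assumes "tri a b c"
  shows "tri b a c" "tri a c b" "tri c b a" "tri b c a" "tri c a b"
  using assms by (meson tri_swap12 tri_swap23)+

lemma link_distinct: "link v p c1 c2 c3 q \<Longrightarrow> distinct [v, p, c1, c2, c3, q]"
  by (simp add: link_3_4_8_def)

lemma link_oedge_iff: "link v p c1 c2 c3 q \<Longrightarrow> oedge v y \<longleftrightarrow> y = p \<or> y = q"
  by (simp add: link_3_4_8_def)

lemma link_tri_iff:
  "link v p c1 c2 c3 q \<Longrightarrow> tri v a b \<longleftrightarrow> (a = p \<and> b = c1) \<or> (a = c1 \<and> b = p) \<or>
     (a = c1 \<and> b = c2) \<or> (a = c2 \<and> b = c1) \<or> (a = c2 \<and> b = c3) \<or> (a = c3 \<and> b = c2) \<or>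
     (a = c3 \<and> b = q) \<or> (a = q \<and> b = c3)"
  by (simp add: link_3_4_8_def)

lemma link_off_octagon: "link v p c1 c2 c3 q \<Longrightarrow> oct c1 \<noteq> oct v \<and> oct c2 \<noteq> oct v \<and> oct c3 \<noteq> oct v"
  by (simp add: link_3_4_8_def)

lemma link_reverse: "link v p c1 c2 c3 q \<Longrightarrow> link v q c3 c2 c1 p"
  unfolding link_3_4_8_def by auto

lemma not_oedge_if_oct_ne: "oct a \<noteq> oct b \<Longrightarrow> \<not> oedge a b"
  using oedge_same_oct by blast

lemma link_of_triangle_strip:
  assumes t1: "tri v \<alpha> \<beta>" and t2: "tri v \<beta> \<gamma>" and t3: "tri v \<gamma> \<delta>"
    and o: "oedge v \<delta>" and nb: "\<not> oedge v \<beta>" and ag: "\<alpha> \<noteq> \<gamma>"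
  shows "\<exists>a. link v a \<alpha> \<beta> \<gamma> \<delta>"
proof -
  have main: "\<exists>a. link v a \<alpha> \<beta> \<gamma> \<delta>" if L: "link v p c1 c2 c3 q" and dq: "\<delta> = q" for p c1 c2 c3 q
  proof -
    note T = link_tri_iff[OF L] and O = link_oedge_iff[OF L] and D = link_distinct[OF L]
    have "\<gamma> = c3" using t3 dq D unfolding T by auto
    moreover have "\<beta> = c2" using t2 \<open>\<gamma> = c3\<close> D nb unfolding T O by auto
    moreover have "\<alpha> = c1" using t1 \<open>\<beta> = c2\<close> \<open>\<gamma> = c3\<close> ag D unfolding T by auto
    ultimately show ?thesis using L dq by blast
  qed
  obtain p c1 c2 c3 q where L: "link v p c1 c2 c3 q" using link_exists tri_in_V[OF t1] by blast
  have "\<delta> = p \<or> \<delta> = q" using o link_oedge_iff[OF L] by blast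
  then show ?thesis using main[OF link_reverse[OF L]] main[OF L] by blast
qed

lemma triangle_strip_ends_at_octagon:
  assumes "tri v \<alpha> \<beta>" "tri v \<beta> \<gamma>" "tri v \<gamma> \<delta>"
    and "\<not> oedge v \<beta>" "\<not> oedge v \<gamma>" "\<not> oedge v \<delta>" "\<alpha> \<noteq> \<gamma>" "\<beta> \<noteq> \<delta>"
  shows "oedge v \<alpha>"
proof -
  obtain p c1 c2 c3 q where L: "link v p c1 c2 c3 q" using link_exists tri_in_V[OF assms(1)] by blast
  show ?thesis using assms link_distinct[OF L] unfolding link_tri_iff[OF L] link_oedge_iff[OF L] by auto
qed

lemma octagon_neighbours_not_two_triangles_apart:
  assumes "oedge v \<alpha>" "oedge v \<gamma>" "\<alpha> \<noteq> \<gamma>" "tri v \<alpha> \<beta>" "tri v \<beta> \<gamma>"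
  shows False
proof -
  obtain p c1 c2 c3 q where L: "link v p c1 c2 c3 q" using link_exists tri_in_V[OF assms(4)] by blast
  show ?thesis using assms link_distinct[OF L] unfolding link_tri_iff[OF L] link_oedge_iff[OF L] by auto
qed

lemma oedge_iff_octagon_neighbour:
  assumes c: "c \<in> V" and j: "j < 8" and cj: "oct c ! j = c"
  shows "oedge c y \<longleftrightarrow> y = oct c ! ((j + 1) mod 8) \<or> y = oct c ! ((j + 7) mod 8)"
proof -
  obtain p c1 c2 c3 q where L: "link c p c1 c2 c3 q" using link_exists[OF c] by blast
  have ob: "distinct (oct c)" "length (oct c) = 8" using oct_at[OF c] by auto
  have e1: "oedge c (oct c ! ((j + 1) mod 8))" using oct_cycle[OF c j] cj by simp
  have "oedge (oct c ! ((j + 7) mod 8)) (oct c ! (((j + 7) mod 8 + 1) mod 8))" using oct_cycle[OF c] by simp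
  moreover have "((j + 7) mod 8 + 1) mod 8 = j" using j by presburger
  ultimately have e2: "oedge c (oct c ! ((j + 7) mod 8))" using cj oedge_sym by simp
  have "(j + 1) mod 8 \<noteq> (j + 7) mod 8" by presburger
  then have "oct c ! ((j + 1) mod 8) \<noteq> oct c ! ((j + 7) mod 8)"
    using nth_eq_iff_index_eq[OF ob(1)] ob(2) by simp
  then show ?thesis using link_oedge_iff[OF L] e1 e2 link_distinct[OF L] by (metis distinct_length_2_or_more)
qed

lemma common_octagon_neighbours:
  assumes "oedge c \<alpha>" "oedge c \<beta>" "oedge d \<alpha>" "oedge d \<beta>" "\<alpha> \<noteq> \<beta>"
  shows "c = d"
proof -
  have c: "c \<in> V" and d: "d \<in> V" using assms oedge_in_V by auto
  have ocd: "oct d = oct c" using assms oedge_same_oct by metis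
  have ob: "distinct (oct c)" "length (oct c) = 8" using oct_at[OF c] by auto
  obtain j where j: "j < 8" "oct c ! j = c" using oct_at[OF c] by (metis in_set_conv_nth)
  obtain k where k: "k < 8" "oct c ! k = d" using oct_at[OF d] ocd by (metis in_set_conv_nth)
  have Nc: "\<And>y. oedge c y \<longleftrightarrow> y = oct c ! ((j + 1) mod 8) \<or> y = oct c ! ((j + 7) mod 8)"
    using oedge_iff_octagon_neighbour[OF c j] .
  have Nd: "\<And>y. oedge d y \<longleftrightarrow> y = oct c ! ((k + 1) mod 8) \<or> y = oct c ! ((k + 7) mod 8)"
    using oedge_iff_octagon_neighbour[OF d k(1)] k(2) ocd by simp
  have I: "\<And>a b. a < 8 \<Longrightarrow> b < 8 \<Longrightarrow> oct c ! a = oct c ! b \<longleftrightarrow> a = b"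
    using nth_eq_iff_index_eq[OF ob(1)] ob(2) by simp
  have "((j + 1) mod 8 = (k + 1) mod 8 \<and> (j + 7) mod 8 = (k + 7) mod 8) \<or>
        ((j + 1) mod 8 = (k + 7) mod 8 \<and> (j + 7) mod 8 = (k + 1) mod 8)"
  proof -
    have "oct c ! ((j + 1) mod 8) = oct c ! ((k + 1) mod 8) \<or> oct c ! ((j + 1) mod 8) = oct c ! ((k + 7) mod 8)"
      and "oct c ! ((j + 7) mod 8) = oct c ! ((k + 1) mod 8) \<or> oct c ! ((j + 7) mod 8) = oct c ! ((k + 7) mod 8)"
      and "oct c ! ((j + 1) mod 8) \<noteq> oct c ! ((j + 7) mod 8)"
      using assms Nc Nd by metis+
    then show ?thesis using I by (simp del: One_nat_def) presburger
  qed
  moreover have False if "(j + 1) mod 8 = (k + 7) mod 8" "(j + 7) mod 8 = (k + 1) mod 8"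
    using that j(1) k(1) by (simp add: mod_if split: if_splits)
  ultimately have "j = k" using j(1) k(1) by (auto simp: mod_Suc split: if_splits)
  then show ?thesis using j k by simp
qed

lemma octagon_among_three:
  assumes "card (oct ` V) \<le> 3"
    and "a \<in> V" "b \<in> V" "c \<in> V" "d \<in> V" "oct a \<noteq> oct b" "oct a \<noteq> oct c" "oct b \<noteq> oct c"
  shows "oct d = oct a \<or> oct d = oct b \<or> oct d = oct c"
proof -
  have s: "{oct a, oct b, oct c} \<subseteq> oct ` V" using assms by auto
  moreover have "card {oct a, oct b, oct c} = 3" using assms by auto
  ultimately have "{oct a, oct b, oct c} = oct ` V"
    using card_subset_eq[OF finite_imageI[OF finite_V] s] card_mono[OF finite_imageI[OF finite_V] s] assms(1)
    by simp
  then show ?thesis using assms(5) by blast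
qed

lemma link_between:
  assumes "oedge v a" "oedge v b" "a \<noteq> b"
  shows "\<exists>c1 c2 c3. link v a c1 c2 c3 b"
proof -
  obtain p c1 c2 c3 q where L: "link v p c1 c2 c3 q" using link_exists oedge_in_V[OF assms(1)] by blast
  have "(a = p \<and> b = q) \<or> (a = q \<and> b = p)" using assms unfolding link_oedge_iff[OF L] by auto
  then show ?thesis using L link_reverse[OF L] by blast
qed

lemma octagon_as_int_cycle:
  assumes "v \<in> V"
  obtains u :: "int \<Rightarrow> 'a" where "\<And>i j. u i = u j \<longleftrightarrow> i mod 8 = j mod 8"
    "\<And>i. oct (u i) = oct v" "\<And>i. oedge (u i) (u (i + 1))"
proof
  let ?Q = "oct v"
  have Q: "distinct ?Q" "length ?Q = 8" using oct_at[OF assms] by auto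
  define u where "u i = ?Q ! nat (i mod 8)" for i :: int
  have u_mem: "u i \<in> set ?Q" for i unfolding u_def using Q(2) by simp
  show "oct (u i) = ?Q" for i using oct_member[OF assms u_mem] by simp
  show "u i = u j \<longleftrightarrow> i mod 8 = j mod 8" for i j
  proof -
    have "u i = u j \<longleftrightarrow> nat (i mod 8) = nat (j mod 8)" unfolding u_def
      using nth_eq_iff_index_eq[OF Q(1)] Q(2) by simp
    also have "\<dots> \<longleftrightarrow> i mod 8 = j mod 8" by (rule eq_nat_nat_iff) simp_all
    finally show ?thesis .
  qed
  show "oedge (u i) (u (i + 1))" for i
  proof -
    have "nat ((i + 1) mod 8) = nat ((i mod 8 + 1) mod 8)" by (simp add: mod_add_left_eq)
    also have "\<dots> = (nat (i mod 8) + 1) mod 8" by (simp add: nat_mod_distrib nat_add_distrib)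
    finally show ?thesis using oct_cycle[OF assms, of "nat (i mod 8)"] unfolding u_def by simp
  qed
qed

end

text \<open>An octagon \<open>u 0, \<dots>, u 7\<close> (indices modulo 8) together with the ring of triangles around it:
  the link of \<open>u i\<close> reads \<open>u (i - 1), w (i - 1), x i, w i, u (i + 1)\<close>, so \<open>w i\<close> is the apex of the
  triangle on the octagon edge \<open>u i u (i + 1)\<close> and \<open>x i\<close> the middle vertex of the link of \<open>u i\<close>.\<close>
locale octagon_belt = links_3_4_8 +
  fixes u w x :: "int \<Rightarrow> 'a"
  assumes belt_link: "link (u i) (u (i - 1)) (w (i - 1)) (x i) (w i) (u (i + 1))"
    and u_eq_iff: "u i = u j \<longleftrightarrow> i mod 8 = j mod 8"
    and u_same_oct: "oct (u i) = oct (u 0)"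
    and w_periodic: "w (i + 8) = w i"
    and x_periodic: "x (i + 8) = x i"
begin

lemma belt_link_succ: "link (u (i + 1)) (u i) (w i) (x (i + 1)) (w (i + 1)) (u (i + 2))"
  using belt_link[of "i + 1"] by (simp add: add.assoc)

lemma tri_w_u_succ: "tri (w i) (u i) (u (i + 1))"
proof -
  have "tri (u i) (w i) (u (i + 1))" using link_tri_iff[OF belt_link[of i]] by simp
  then show ?thesis by (rule tri_perms)
qed

lemma tri_w_x_u: "tri (w i) (x i) (u i)"
proof -
  have "tri (u i) (x i) (w i)" using link_tri_iff[OF belt_link[of i]] by simp
  then show ?thesis by (rule tri_perms)
qed

lemma tri_w_u_x_succ: "tri (w i) (u (i + 1)) (x (i + 1))"
proof -
  have "tri (u (i + 1)) (w i) (x (i + 1))" using link_tri_iff[OF belt_link_succ[of i]] by simp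
  then show ?thesis by (rule tri_perms)
qed

lemma tri_x_w_pred_u: "tri (x i) (w (i - 1)) (u i)"
proof -
  have "tri (u i) (w (i - 1)) (x i)" using link_tri_iff[OF belt_link[of i]] by simp
  then show ?thesis by (rule tri_perms)
qed

lemma tri_x_u_w: "tri (x i) (u i) (w i)"
proof -
  have "tri (u i) (x i) (w i)" using link_tri_iff[OF belt_link[of i]] by simp
  then show ?thesis by (rule tri_perms)
qed

lemma oct_w_ne: "oct (w i) \<noteq> oct (u j)"
  using link_off_octagon[OF belt_link[of i]] u_same_oct by metis

lemma oct_x_ne: "oct (x i) \<noteq> oct (u j)"
  using link_off_octagon[OF belt_link[of i]] u_same_oct by metis

lemma u_in_V: "u i \<in> V" and w_in_V: "w i \<in> V" and x_in_V: "x i \<in> V"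
  using tri_in_V[OF tri_perms(4)[OF tri_w_u_succ]] tri_in_V[OF tri_w_u_succ] tri_in_V[OF tri_x_u_w] .

lemma not_oedge_w_u: "\<not> oedge (w i) (u j)"
  using not_oedge_if_oct_ne oct_w_ne by metis

lemma w_oedge_x_or_x_succ: "oedge (w i) (x (i + 1)) \<or> oedge (w i) (x i)"
proof (cases "oedge (w i) (x (i + 1))")
  case False
  have "x i \<noteq> u (i + 1)" "u i \<noteq> x (i + 1)" using oct_x_ne by metis+
  then show ?thesis
    using triangle_strip_ends_at_octagon[OF tri_w_x_u tri_w_u_succ tri_w_u_x_succ
        not_oedge_w_u not_oedge_w_u False] by simp
qed simp

text \<open>Otherwise \<open>x (i + 1)\<close> would have both octagon neighbours \<open>w i\<close> and \<open>w (i + 1)\<close>, only two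
  triangles apart.\<close>
lemma twist_propagates: "oedge (w i) (x (i + 1)) \<Longrightarrow> oedge (w (i + 1)) (x (i + 2))"
proof (rule ccontr)
  assume r: "oedge (w i) (x (i + 1))" and n: "\<not> oedge (w (i + 1)) (x (i + 2))"
  have "oedge (w (i + 1)) (x (i + 1))"
    using w_oedge_x_or_x_succ[of "i + 1"] n by (simp add: add.assoc)
  moreover have "w i \<noteq> w (i + 1)" using link_distinct[OF belt_link_succ[of i]] by simp
  moreover have "tri (x (i + 1)) (w i) (u (i + 1))" using tri_x_w_pred_u[of "i + 1"] by simp
  ultimately show False
    using octagon_neighbours_not_two_triangles_apart[OF oedge_sym[OF r] oedge_sym _ _ tri_x_u_w]
    by blast
qed

lemma belt_chirality: "(\<forall>i. oedge (w i) (x (i + 1))) \<or> (\<forall>i. oedge (w i) (x i))"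
proof -
  let ?R = "\<lambda>i. oedge (w i) (x (i + 1))"
  have periodic: "?R (i + 8) = ?R i" for i
    using w_periodic x_periodic[of "i + 1"] by (simp add: algebra_simps)
  have step: "?R i \<Longrightarrow> ?R (i + 1)" for i using twist_propagates[of i] by (simp add: add.assoc)
  have "?R i \<Longrightarrow> ?R j" for i j using periodic_int_propagate[of ?R 8, OF periodic step] by simp
  then show ?thesis using w_oedge_x_or_x_succ by blast
qed

lemma belt_mirror: "octagon_belt V oct oedge tri (\<lambda>i. u (- i)) (\<lambda>i. w (- i - 1)) (\<lambda>i. x (- i))"
proof (rule octagon_belt.intro[OF links_3_4_8_axioms], unfold_locales)
  fix i j :: int
  have "link (u (- i)) (u (- i + 1)) (w (- i)) (x (- i)) (w (- i - 1)) (u (- i - 1))"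
    using link_reverse[OF belt_link[of "- i"]] .
  moreover have "- (i - 1) = - i + 1" "- (i - 1) - 1 = - i" "- (i + 1) = - i - 1" by simp_all
  ultimately show "link (u (- i)) (u (- (i - 1))) (w (- (i - 1) - 1)) (x (- i)) (w (- i - 1)) (u (- (i + 1)))"
    by (simp only:)
  have "(- i) mod 8 = (- j) mod 8 \<longleftrightarrow> i mod 8 = j mod 8"
    unfolding mod_eq_dvd_iff by (metis minus_diff_eq dvd_minus_iff diff_minus_eq_add uminus_add_conv_diff)
  then show "u (- i) = u (- j) \<longleftrightarrow> i mod 8 = j mod 8" using u_eq_iff by simp
  show "oct (u (- i)) = oct (u (- 0))" using u_same_oct by simp
  have "- (i + 8) - 1 = (- i - 1) - 8" "- (i + 8) = - i - 8" by simp_all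
  then show "w (- (i + 8) - 1) = w (- i - 1)" "x (- (i + 8)) = x (- i)"
    by (metis w_periodic diff_add_cancel, metis x_periodic diff_add_cancel)
qed

end

locale twisted_belt = octagon_belt +
  assumes twisted: "oedge (w i) (x (i + 1))"
    and at_most_three_octagons: "card (oct ` V) \<le> 3"
begin

lemma w_link_exists: "\<exists>a. link (w i) a (x i) (u i) (u (i + 1)) (x (i + 1))"
proof (rule link_of_triangle_strip)
  show "tri (w i) (x i) (u i)" by (rule tri_w_x_u)
  show "tri (w i) (u i) (u (i + 1))" by (rule tri_w_u_succ)
  show "tri (w i) (u (i + 1)) (x (i + 1))" by (rule tri_w_u_x_succ)
  show "oedge (w i) (x (i + 1))" by (rule twisted)
  show "\<not> oedge (w i) (u i)" by (rule not_oedge_w_u)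
  show "x i \<noteq> u (i + 1)" using oct_x_ne by metis
qed

definition w_nbr :: "int \<Rightarrow> 'a" where
  "w_nbr i = (SOME a. link (w i) a (x i) (u i) (u (i + 1)) (x (i + 1)))"

lemma link_at_w: "link (w i) (w_nbr i) (x i) (u i) (u (i + 1)) (x (i + 1))"
  unfolding w_nbr_def using w_link_exists by (rule someI_ex)

lemma oct_x_ne_w: "oct (x i) \<noteq> oct (w i)"
  using link_off_octagon[OF link_at_w] by metis

lemma oedge_w_nbr: "oedge (w i) (w_nbr i)"
  using link_oedge_iff[OF link_at_w] by simp

lemma oct_w_nbr: "oct (w_nbr i) = oct (w i)"
  using oedge_same_oct[OF oedge_w_nbr] by simp

lemma x_link_exists: "\<exists>b. link (x i) (w (i - 1)) (u i) (w i) (w_nbr i) b"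
proof -
  have "\<exists>b. link (x i) b (w_nbr i) (w i) (u i) (w (i - 1))"
  proof (rule link_of_triangle_strip)
    have "tri (w i) (w_nbr i) (x i)" using link_tri_iff[OF link_at_w] by simp
    then show "tri (x i) (w_nbr i) (w i)" by (rule tri_perms)
    show "tri (x i) (w i) (u i)" using tri_x_u_w by (rule tri_perms)
    show "tri (x i) (u i) (w (i - 1))" using tri_x_w_pred_u by (rule tri_perms)
    show "oedge (x i) (w (i - 1))" using twisted[of "i - 1"] oedge_sym by simp
    show "\<not> oedge (x i) (w i)" using not_oedge_if_oct_ne oct_x_ne_w by metis
    show "w_nbr i \<noteq> u i" using oct_w_nbr oct_w_ne by metis
  qed
  then show ?thesis using link_reverse by blast
qed

definition x_nbr :: "int \<Rightarrow> 'a" where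
  "x_nbr i = (SOME b. link (x i) (w (i - 1)) (u i) (w i) (w_nbr i) b)"

lemma link_at_x: "link (x i) (w (i - 1)) (u i) (w i) (w_nbr i) (x_nbr i)"
  unfolding x_nbr_def using x_link_exists by (rule someI_ex)

lemma oct_x_succ: "oct (x (i + 1)) = oct (w i)"
  using oedge_same_oct[OF twisted] by simp

lemma oct_w_succ_ne: "oct (w (i + 1)) \<noteq> oct (w i)"
  using oct_x_ne_w oct_x_succ by metis

text \<open>With at most three octagons, the \<open>w i\<close> alternate between the two octagons other than the
  belt.\<close>
lemma oct_w_succ2: "oct (w (i + 2)) = oct (w i)"
proof -
  have "oct (w (i + 1 + 1)) \<noteq> oct (w (i + 1))" by (rule oct_w_succ_ne)
  moreover have "oct (w (i + 2)) = oct (u 0) \<or> oct (w (i + 2)) = oct (w i) \<or> oct (w (i + 2)) = oct (w (i + 1))"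
    using octagon_among_three[OF at_most_three_octagons u_in_V w_in_V w_in_V w_in_V] oct_w_ne oct_w_succ_ne
    by metis
  ultimately show ?thesis using oct_w_ne by (simp add: add.assoc)
qed

lemma u_ne_w_nbr: "u i \<noteq> w_nbr j" and u_ne_x: "u i \<noteq> x j" and u_ne_w: "u i \<noteq> w j"
  and u_ne_x_nbr: "u i \<noteq> x_nbr j"
proof -
  have "oct (x_nbr j) = oct (x j)"
    using link_oedge_iff[OF link_at_x] oedge_same_oct by (metis (full_types))
  then show "u i \<noteq> w_nbr j" "u i \<noteq> x j" "u i \<noteq> w j" "u i \<noteq> x_nbr j"
    using oct_w_nbr oct_w_ne oct_x_ne u_same_oct by metis+
qed

lemma w_eq_imp_mod_eq: "w i = w j \<Longrightarrow> i mod 8 = j mod 8"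
proof -
  assume "w i = w j"
  then have "tri (w j) (u i) (u (i + 1))" using tri_w_u_succ by metis
  then have "(u i = u j \<and> u (i + 1) = u (j + 1)) \<or> (u i = u (j + 1) \<and> u (i + 1) = u j)"
    using u_ne_w_nbr u_ne_x unfolding link_tri_iff[OF link_at_w[of j]] by metis
  then have "(i mod 8 = j mod 8 \<and> (i + 1) mod 8 = (j + 1) mod 8) \<or>
      (i mod 8 = (j + 1) mod 8 \<and> (i + 1) mod 8 = j mod 8)"
    using u_eq_iff by simp
  moreover have "\<not> (8 dvd (i - (j + 1)) \<and> 8 dvd (i + 1 - j))"
    using dvd_diff[of 8 "i + 1 - j" "i - (j + 1)"] by auto
  ultimately show "i mod 8 = j mod 8" unfolding mod_eq_dvd_iff by auto
qed

lemma x_eq_imp_mod_eq: "x i = x j \<Longrightarrow> i mod 8 = j mod 8"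
proof -
  assume "x i = x j"
  then have "tri (x j) (u i) (w i)" using tri_x_u_w by metis
  then have "u i = u j" using u_ne_w_nbr u_ne_w u_ne_x_nbr unfolding link_tri_iff[OF link_at_x[of j]] by metis
  then show "i mod 8 = j mod 8" using u_eq_iff by metis
qed

lemma w_ne_x: "w i \<noteq> x j"
proof
  assume "w i = x j"
  then have "tri (x j) (u i) (u (i + 1))" using tri_w_u_succ by metis
  then have "u i = u j \<and> u (i + 1) = u j"
    using u_ne_w_nbr u_ne_w u_ne_x_nbr unfolding link_tri_iff[OF link_at_x[of j]] by metis
  then have "i mod 8 = (i + 1) mod 8" using u_eq_iff by simp
  then show False unfolding mod_eq_dvd_iff by simp
qed

lemma w_eq_if_dvd: "8 dvd (i - j) \<Longrightarrow> w i = w j"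
  using periodic_int_mod_eq[of w 8] w_periodic unfolding mod_eq_dvd_iff by blast

lemma x_eq_if_dvd: "8 dvd (i - j) \<Longrightarrow> x i = x j"
  using periodic_int_mod_eq[of x 8] x_periodic unfolding mod_eq_dvd_iff by blast

lemma w_nbr_ne_w: "w_nbr i \<noteq> w k"
proof
  assume e: "w_nbr i = w k"
  have "oedge (w k) (w i)" using oedge_w_nbr[of i] e oedge_sym by metis
  then have "w i = w_nbr k" using link_oedge_iff[OF link_at_w[of k]] w_ne_x by metis
  have "tri (w i) (w_nbr i) (x i)" using link_tri_iff[OF link_at_w[of i]] by simp
  then have "tri (w k) (w_nbr k) (x i)" using e \<open>w i = w_nbr k\<close> tri_perms by metis
  then have "x i = x k" using link_distinct[OF link_at_w[of k]] unfolding link_tri_iff[OF link_at_w[of k]] by auto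
  then have "w k = w i" using x_eq_imp_mod_eq w_eq_if_dvd unfolding mod_eq_dvd_iff by metis
  then show False using e link_distinct[OF link_at_w[of i]] by simp
qed

text \<open>\<open>w i\<close> and \<open>x j\<close> are then the two octagon neighbours of each other's partner.\<close>
lemma w_nbr_swap: "w_nbr i = x j \<Longrightarrow> w_nbr j = x i"
proof -
  assume e: "w_nbr i = x j"
  have "oedge (x j) (w i)" using oedge_w_nbr[of i] e oedge_sym by metis
  then have "w i = w (j - 1) \<or> w i = x_nbr j" using link_oedge_iff[OF link_at_x[of j]] by metis
  moreover have "w i \<noteq> w (j - 1)"
  proof
    assume "w i = w (j - 1)"
    then have "i mod 8 = (j - 1) mod 8" by (rule w_eq_imp_mod_eq)
    then have "8 dvd (i + 1 - j)" unfolding mod_eq_dvd_iff by (simp add: algebra_simps)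
    then have "x (i + 1) = x j" by (rule x_eq_if_dvd)
    then show False using e link_distinct[OF link_at_w[of i]] by simp
  qed
  ultimately have "x_nbr j = w i" by simp
  moreover have "tri (x j) (w_nbr j) (x_nbr j)" using link_tri_iff[OF link_at_x[of j]] by simp
  ultimately have "tri (w i) (w_nbr i) (w_nbr j)" using e tri_perms by metis
  then show "w_nbr j = x i"
    using link_distinct[OF link_at_w[of i]] unfolding link_tri_iff[OF link_at_w[of i]] by auto
qed


lemma w_ne: "\<not> 8 dvd (i - j) \<Longrightarrow> w i \<noteq> w j"
  using w_eq_imp_mod_eq unfolding mod_eq_dvd_iff by blast

lemma x_ne: "\<not> 8 dvd (i - j) \<Longrightarrow> x i \<noteq> x j"
  using x_eq_imp_mod_eq unfolding mod_eq_dvd_iff by blast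

text \<open>The octagon of \<open>w i\<close> consists of \<open>w i, w (i + 2), w (i + 4), w (i + 6)\<close> and
  \<open>x (i + 1), x (i + 3), x (i + 5), x (i + 7)\<close>.\<close>
lemma w_nbr_cases: "w_nbr i = x (i + 3) \<or> w_nbr i = x (i + 5)"
proof -
  have O: "distinct (oct (w i))" "length (oct (w i)) = 8" using oct_at[OF w_in_V] by auto
  have o2: "oct (w (i + 2)) = oct (w i)" by (rule oct_w_succ2)
  have o4: "oct (w (i + 4)) = oct (w i)" using oct_w_succ2[of "i + 2"] o2 by (simp add: add.assoc)
  have o6: "oct (w (i + 6)) = oct (w i)" using oct_w_succ2[of "i + 4"] o4 by (simp add: add.assoc)
  have p1: "oct (x (i + 1)) = oct (w i)" by (rule oct_x_succ)
  have p3: "oct (x (i + 3)) = oct (w i)" using oct_x_succ[of "i + 2"] o2 by (simp add: add.assoc)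
  have p5: "oct (x (i + 5)) = oct (w i)" using oct_x_succ[of "i + 4"] o4 by (simp add: add.assoc)
  have p7: "oct (x (i + 7)) = oct (w i)" using oct_x_succ[of "i + 6"] o6 by (simp add: add.assoc)
  have mem: "\<And>y. y \<in> V \<Longrightarrow> oct y = oct (w i) \<Longrightarrow> y \<in> set (oct (w i))" using oct_at by metis
  let ?L = "[w i, w (i + 2), w (i + 4), w (i + 6), x (i + 1), x (i + 3), x (i + 5), x (i + 7)]"
  have sub: "set ?L \<subseteq> set (oct (w i))"
    using mem w_in_V x_in_V o2 o4 o6 p1 p3 p5 p7 by auto
  have dist: "distinct ?L" by (simp add: w_ne x_ne w_ne_x)
  have "card (set ?L) = card (set (oct (w i)))"
    using distinct_card[OF dist] distinct_card[OF O(1)] O(2) by simp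
  then have "set ?L = set (oct (w i))" using card_subset_eq[OF finite_set sub] by simp
  moreover have "w_nbr i \<in> set (oct (w i))"
    using mem oct_w_nbr oedge_in_V[OF oedge_sym[OF oedge_w_nbr]] by simp
  ultimately have "w_nbr i = x (i + 1) \<or> w_nbr i = x (i + 3) \<or> w_nbr i = x (i + 5) \<or> w_nbr i = x (i + 7)"
    using w_nbr_ne_w by auto
  moreover have "w_nbr i \<noteq> x (i + 1)" using link_distinct[OF link_at_w[of i]] by simp
  moreover have "w_nbr i \<noteq> x (i + 7)"
  proof
    assume "w_nbr i = x (i + 7)"
    then have "w_nbr (i + 7) = x i" by (rule w_nbr_swap)
    moreover have "w_nbr (i + 7) \<noteq> x (i + 7 + 1)" using link_distinct[OF link_at_w[of "i + 7"]] by simp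
    moreover have "x (i + 7 + 1) = x i" using x_periodic[of i] by (simp add: add.assoc)
    ultimately show False by simp
  qed
  ultimately show ?thesis by blast
qed

text \<open>Otherwise \<open>w i\<close> and \<open>w (i + 4)\<close> would share both octagon neighbours
  \<open>x (i + 1)\<close> and \<open>x (i + 5)\<close>.\<close>
lemma w_nbr_shift_5: "w_nbr i = x (i + 5) \<Longrightarrow> w_nbr (i + 4) = x (i + 7)"
proof -
  assume a: "w_nbr i = x (i + 5)"
  have "w_nbr (i + 4) = x (i + 7) \<or> w_nbr (i + 4) = x (i + 9)"
    using w_nbr_cases[of "i + 4"] by (simp add: add.assoc)
  moreover have "w_nbr (i + 4) \<noteq> x (i + 9)"
  proof
    assume b: "w_nbr (i + 4) = x (i + 9)"
    have "x (i + 9) = x (i + 1)" by (rule x_eq_if_dvd) simp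
    have "w i = w (i + 4)"
    proof (rule common_octagon_neighbours)
      show "oedge (w i) (x (i + 1))" by (rule twisted)
      show "oedge (w i) (x (i + 5))" using oedge_w_nbr[of i] a by simp
      show "oedge (w (i + 4)) (x (i + 1))" using oedge_w_nbr[of "i + 4"] b \<open>x (i + 9) = x (i + 1)\<close> by simp
      show "oedge (w (i + 4)) (x (i + 5))" using twisted[of "i + 4"] by (simp add: add.assoc)
      show "x (i + 1) \<noteq> x (i + 5)" by (rule x_ne) simp
    qed
    then show False using w_ne[of i "i + 4"] by simp
  qed
  ultimately show ?thesis by blast
qed

lemma w_nbr_shift_3: "w_nbr i = x (i + 3) \<Longrightarrow> w_nbr (i + 7) = x (i + 10)"
proof -
  assume "w_nbr i = x (i + 3)"
  then have "w_nbr (i + 3) = x i" by (rule w_nbr_swap)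
  also have "x i = x (i + 3 + 5)" by (rule x_eq_if_dvd) simp
  finally show ?thesis using w_nbr_shift_5[of "i + 3"] by (simp add: add.assoc)
qed

lemma no_twisted_belt: False
proof -
  have "\<exists>i. w_nbr i = x (i + 3)"
  proof (cases "w_nbr 0 = x 3")
    case False
    then have "w_nbr 0 = x 5" using w_nbr_cases[of 0] by simp
    then have "w_nbr 4 = x 7" using w_nbr_shift_5[of 0] by simp
    then show ?thesis by (intro exI[of _ 4]) simp
  qed (metis add_0)
  then obtain i where i: "w_nbr i = x (i + 3)" by blast
  have "w_nbr (i + 7) = x (i + 7 + 3)" using w_nbr_shift_3[OF i] by (simp add: add.assoc)
  then have "w_nbr (i + 14) = x (i + 14 + 3)" using w_nbr_shift_3[of "i + 7"] by (simp add: add.assoc)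
  then have "w_nbr (i + 21) = x (i + 24)" using w_nbr_shift_3[of "i + 14"] by (simp add: add.assoc)
  also have "x (i + 24) = x i" by (rule x_eq_if_dvd) simp
  finally have "w_nbr i = x (i + 21)" by (rule w_nbr_swap)
  also have "x (i + 21) = x (i + 5)" by (rule x_eq_if_dvd) simp
  finally show False using i x_ne[of "i + 3" "i + 5"] by simp
qed

end

context octagon_belt
begin

lemma at_most_three_octagons_absurd:
  assumes "card (oct ` V) \<le> 3"
  shows False
  using belt_chirality
proof
  assume "\<forall>i. oedge (w i) (x (i + 1))"
  then have "twisted_belt V oct oedge tri u w x"
    using assms by (intro twisted_belt.intro octagon_belt.intro links_3_4_8_axioms octagon_belt_axioms
        twisted_belt_axioms.intro) simp_all
  then show False by (rule twisted_belt.no_twisted_belt)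
next
  assume twist: "\<forall>i. oedge (w i) (x i)"
  have "twisted_belt V oct oedge tri (\<lambda>i. u (- i)) (\<lambda>i. w (- i - 1)) (\<lambda>i. x (- i))"
  proof (intro twisted_belt.intro belt_mirror twisted_belt_axioms.intro assms)
    fix i :: int
    show "oedge (w (- i - 1)) (x (- (i + 1)))" using twist[rule_format, of "- i - 1"] by simp
  qed
  then show False by (rule twisted_belt.no_twisted_belt)
qed

end

context links_3_4_8
begin

lemma octagon_belt_exists: "\<exists>u w x. octagon_belt V oct oedge tri u w x"
proof -
  obtain v where v: "v \<in> V" using V_nonempty by blast
  obtain u :: "int \<Rightarrow> 'a" where u_eq_iff: "\<And>i j. u i = u j \<longleftrightarrow> i mod 8 = j mod 8"
    and u_oct: "\<And>i. oct (u i) = oct v" and u_oedge: "\<And>i. oedge (u i) (u (i + 1))"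
    using octagon_as_int_cycle[OF v] by blast
  have "\<exists>t. link (u i) (u (i - 1)) (fst t) (fst (snd t)) (snd (snd t)) (u (i + 1))" for i
  proof -
    have "oedge (u i) (u (i - 1))" using u_oedge[of "i - 1"] oedge_sym by simp
    moreover have "u (i - 1) \<noteq> u (i + 1)" unfolding u_eq_iff mod_eq_dvd_iff by simp
    ultimately obtain c1 c2 c3 where "link (u i) (u (i - 1)) c1 c2 c3 (u (i + 1))"
      using link_between[OF _ u_oedge] by blast
    then show ?thesis by (intro exI[of _ "(c1, c2, c3)"]) simp
  qed
  define t where
    "t i = (SOME t. link (u i) (u (i - 1)) (fst t) (fst (snd t)) (snd (snd t)) (u (i + 1)))" for i
  have t: "link (u i) (u (i - 1)) (fst (t i)) (fst (snd (t i))) (snd (snd (t i))) (u (i + 1))" for i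
    unfolding t_def by (rule someI_ex) fact
  define w where "w i = snd (snd (t i))" for i
  define x where "x i = fst (snd (t i))" for i
  text \<open>The triangle on the octagon edge \<open>u i u (i + 1)\<close> is seen from both of its ends.\<close>
  have first: "fst (t i) = w (i - 1)" for i
  proof -
    have "tri (u i) (u (i - 1)) (fst (t i))" using link_tri_iff[OF t[of i]] by simp
    then have "tri (u (i - 1)) (u i) (fst (t i))" by (rule tri_perms)
    then have "tri (u (i - 1)) (u (i - 1 + 1)) (fst (t i))" by simp
    then show ?thesis unfolding w_def
      using link_distinct[OF t[of "i - 1"]] unfolding link_tri_iff[OF t[of "i - 1"]] by auto
  qed
  have "octagon_belt V oct oedge tri u w x"
  proof (unfold_locales)
    fix i j :: int
    show "link (u i) (u (i - 1)) (w (i - 1)) (x i) (w i) (u (i + 1))"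
      using t[of i] first[of i] unfolding w_def x_def by simp
    show "u i = u j \<longleftrightarrow> i mod 8 = j mod 8" by (rule u_eq_iff)
    show "oct (u i) = oct (u 0)" using u_oct by simp
    have "u (i + 8 - 1) = u (i - 1)" "u (i + 8) = u i" "u (i + 8 + 1) = u (i + 1)"
      unfolding u_eq_iff mod_eq_dvd_iff by simp_all
    then have "t (i + 8) = t i" unfolding t_def by simp
    then show "w (i + 8) = w i" "x (i + 8) = x i" unfolding w_def x_def by simp_all
  qed
  then show ?thesis by blast
qed

theorem three_lt_card_octagons: "3 < card (oct ` V)"
proof (rule ccontr)
  assume "\<not> 3 < card (oct ` V)"
  moreover obtain u w x where "octagon_belt V oct oedge tri u w x" using octagon_belt_exists by blast
  ultimately show False using octagon_belt.at_most_three_octagons_absurd by (metis not_less)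
qed

end

locale semi_equivelar_3_4_8 =
  fixes F :: "'a list set"
  assumes semi_equivelar: "semi_equivelar F [3, 3, 3, 3, 8]"

sublocale semi_equivelar_3_4_8 \<subseteq> polyhedral
  using semi_equivelar unfolding semi_equivelar_def by unfold_locales blast

context semi_equivelar_3_4_8
begin

lemma faces_around_vertex:
  assumes "v \<in> map_vertices F"
  obtains g0 g1 g2 g3 g4 where "distinct [g0, g1, g2, g3, g4]" "faces_at F v = {g0, g1, g2, g3, g4}"
    "length g0 = 8" "length g1 = 3" "length g2 = 3" "length g3 = 3" "length g4 = 3"
    "adj_at F v g0 g1" "adj_at F v g1 g2" "adj_at F v g2 g3" "adj_at F v g3 g4" "adj_at F v g4 g0"
proof -
  let ?adj = "\<lambda>f g. \<exists>e\<in>poly_edges f \<inter> poly_edges g. v \<in> e"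
  obtain fs where fs: "distinct fs" "set fs = faces_at F v" "length fs = 5"
    and chain: "\<forall>i<length fs. ?adj (fs ! i) (fs ! (Suc i mod length fs))"
    and "\<exists>k. rotate k (map length fs) = [3, 3, 3, 3, 8] \<or> rotate k (rev (map length fs)) = [3, 3, 3, 3, 8]"
    using semi_equivelar assms unfolding semi_equivelar_def vertex_type_def by fastforce
  then have "mset (map length fs) = mset [3, 3, 3, 3, 8::nat]"
    by (metis mset_rev mset_rotate)
  then have lengths: "mset (map length fs) = {#3, 3, 3, 3, 8#}" by simp
  then have "set (map length fs) = set_mset {#3, 3, 3, 3, 8#}" by (metis set_mset_mset)
  then have "8 \<in> set (map length fs)" by simp
  then obtain k where k: "k < 5" "length (fs ! k) = 8"
    using fs(3) by (auto simp: in_set_conv_nth)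
  define gs where "gs = rotate k fs"
  have gs: "distinct gs" "set gs = faces_at F v" "length gs = 5" "gs ! 0 = fs ! k"
    "mset (map length gs) = {#3, 3, 3, 3, 8#}"
    using fs k lengths by (simp_all add: gs_def nth_rotate mset_rotate flip: rotate_map)
  have gs_chain: "\<forall>i<5. ?adj (gs ! i) (gs ! (Suc i mod 5))"
    using cyclic_chain_rotate[OF chain] fs(3) by (simp add: gs_def)
  obtain g0 g1 g2 g3 g4 where g: "gs = [g0, g1, g2, g3, g4]"
    using gs(3) by (auto simp: numeral_eq_Suc length_Suc_conv)
  have dist: "distinct [g0, g1, g2, g3, g4]" and faces: "faces_at F v = {g0, g1, g2, g3, g4}"
    using gs(1,2) unfolding g by simp_all
  have "?adj g0 g1" "?adj g1 g2" "?adj g2 g3" "?adj g3 g4" "?adj g4 g0"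
    using gs_chain[rule_format, of 0] gs_chain[rule_format, of 1] gs_chain[rule_format, of 2]
      gs_chain[rule_format, of 3] gs_chain[rule_format, of 4] by (simp_all add: g)
  then have "adj_at F v g0 g1" "adj_at F v g1 g2" "adj_at F v g2 g3" "adj_at F v g3 g4" "adj_at F v g4 g0"
    using dist unfolding adj_at_def faces by auto
  moreover have "length g0 = 8" "length g1 = 3" "length g2 = 3" "length g3 = 3" "length g4 = 3"
    using gs(4,5) k(2) unfolding g by (auto dest!: arg_cong[where f = set_mset])
  ultimately show thesis using that dist faces by blast
qed


lemma edge_between_faces:
  assumes "adj_at F v f g"
  obtains y where "y \<noteq> v" "{v, y} \<in> poly_edges f" "{v, y} \<in> poly_edges g"
  using assms edge_through_vertex[OF face_distinct face_length]
  unfolding adj_at_def faces_at_def by (metis IntD1 IntD2 mem_Collect_eq)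

lemma link_at_vertex:
  assumes "v \<in> map_vertices F"
  obtains Oc T1 T2 T3 T4 p c1 c2 c3 q where
    "faces_at F v = {Oc, T1, T2, T3, T4}" "distinct [Oc, T1, T2, T3, T4]"
    "length Oc = 8" "length T1 = 3" "length T2 = 3" "length T3 = 3" "length T4 = 3"
    "set T1 = {v, p, c1}" "set T2 = {v, c1, c2}" "set T3 = {v, c2, c3}" "set T4 = {v, c3, q}"
    "distinct [v, p, c1, c2, c3, q]" "{e \<in> poly_edges Oc. v \<in> e} = {{v, p}, {v, q}}"
    "c1 \<notin> set Oc" "c2 \<notin> set Oc" "c3 \<notin> set Oc"
proof -
  obtain g0 g1 g2 g3 g4 where dist: "distinct [g0, g1, g2, g3, g4]"
    and faces: "faces_at F v = {g0, g1, g2, g3, g4}"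
    and len: "length g0 = 8" "length g1 = 3" "length g2 = 3" "length g3 = 3" "length g4 = 3"
    and adj: "adj_at F v g0 g1" "adj_at F v g1 g2" "adj_at F v g2 g3" "adj_at F v g3 g4" "adj_at F v g4 g0"
    using faces_around_vertex[OF assms] by blast
  have inF: "g0 \<in> F" "g1 \<in> F" "g2 \<in> F" "g3 \<in> F" "g4 \<in> F"
    and v_in: "v \<in> set g0" "v \<in> set g2"
    using faces unfolding faces_at_def by blast+
  obtain p where p: "p \<noteq> v" "{v, p} \<in> poly_edges g0" "{v, p} \<in> poly_edges g1"
    using edge_between_faces[OF adj(1)] .
  obtain c1 where c1: "c1 \<noteq> v" "{v, c1} \<in> poly_edges g1" "{v, c1} \<in> poly_edges g2"
    using edge_between_faces[OF adj(2)] .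
  obtain c2 where c2: "c2 \<noteq> v" "{v, c2} \<in> poly_edges g2" "{v, c2} \<in> poly_edges g3"
    using edge_between_faces[OF adj(3)] .
  obtain c3 where c3: "c3 \<noteq> v" "{v, c3} \<in> poly_edges g3" "{v, c3} \<in> poly_edges g4"
    using edge_between_faces[OF adj(4)] .
  obtain q where q: "q \<noteq> v" "{v, q} \<in> poly_edges g4" "{v, q} \<in> poly_edges g0"
    using edge_between_faces[OF adj(5)] .
  have ne: "a \<noteq> b" if "{v, a} \<in> poly_edges f" "{v, a} \<in> poly_edges g" "{v, b} \<in> poly_edges h"
    "f \<in> F" "g \<in> F" "h \<in> F" "distinct [f, g, h]" for a b f g h
    using no_edge_in_three_faces[OF that(4-7) that(1,2)] that(3) by blast
  have "p \<noteq> c1" "p \<noteq> c2" "p \<noteq> c3" "p \<noteq> q" "c1 \<noteq> c2" "c1 \<noteq> c3" "c1 \<noteq> q"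
    "c2 \<noteq> c3" "c2 \<noteq> q" "c3 \<noteq> q"
    using ne[OF p(2,3) c1(3) inF(1-3)] ne[OF p(2,3) c2(2) inF(1-3)] ne[OF p(2,3) c3(2) inF(1,2,4)]
      ne[OF p(2,3) q(2) inF(1,2,5)] ne[OF c1(2,3) c2(3) inF(2-4)] ne[OF c1(2,3) c3(2) inF(2-4)]
      ne[OF c1(2,3) q(2) inF(2,3,5)] ne[OF c2(2,3) c3(3) inF(3-5)] ne[OF c2(2,3) q(2) inF(3-5)]
      ne[OF c3(2,3) q(3) inF(4,5,1)] dist
    by (simp_all add: eq_commute[of g3 g0] eq_commute[of g4 g0])
  then have D: "distinct [v, p, c1, c2, c3, q]" using p(1) c1(1) c2(1) c3(1) q(1) by auto
  have triangle: "set T = {v, a, b}"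
    if "T \<in> F" "length T = 3" "{v, a} \<in> poly_edges T" "{v, b} \<in> poly_edges T" "distinct [v, a, b]"
    for T a b
    using triangle_set_eq[OF face_distinct[OF that(1)] that(2,5)] poly_edges_subset_set that(3,4)
    by blast
  have T: "set g1 = {v, p, c1}" "set g2 = {v, c1, c2}" "set g3 = {v, c2, c3}" "set g4 = {v, c3, q}"
    using triangle[OF inF(2) len(2) p(3) c1(2)] triangle[OF inF(3) len(3) c1(3) c2(2)]
      triangle[OF inF(4) len(4) c2(3) c3(2)] triangle[OF inF(5) len(5) c3(3) q(2)] D
    by auto
  have oct_edges: "{e \<in> poly_edges g0. v \<in> e} = {{v, p}, {v, q}}"
    using edges_at_vertex_eq[OF face_distinct face_length] inF(1) p(2) q(3) D by simp
  have ne_faces: "g0 \<noteq> g1" "g0 \<noteq> g2" "g0 \<noteq> g4" using dist by auto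
  have three_common: False if "distinct [a, b, c]" "{a, b, c} \<subseteq> set g0 \<inter> set g" "g \<in> F" "g0 \<noteq> g"
    for a b c g
    using card_mono[OF _ that(2)] card_face_inter_le_2[OF inF(1) that(3,4)] that(1) by simp
  have c13: "c1 \<notin> set g0" "c3 \<notin> set g0"
    using three_common[of v p c1 g1] three_common[of v c3 q g4] ne_faces v_in(1) D T
      poly_edges_subset_set[OF p(2)] poly_edges_subset_set[OF q(3)] inF by auto
  have c2_out: "c2 \<notin> set g0"
  proof
    assume "c2 \<in> set g0"
    then have "set g0 \<inter> set g2 = {v, c2}" using T(2) v_in(1) c13(1) by (simp add: Int_insert_right)
    then have "{v, c2} \<in> poly_edges g0"
      by (rule face_inter_doubleton_is_edge[OF inF(1,3) ne_faces(2) c2(1)[symmetric]])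
    then have "{v, c2} \<in> {{v, p}, {v, q}}" unfolding oct_edges[symmetric] by simp
    then show False using D by (simp add: doubleton_eq_iff)
  qed
  show thesis by (rule that[OF faces dist len T D oct_edges c13(1) c2_out c13(2)])
qed


lemma octagon_at_vertex:
  assumes "v \<in> map_vertices F"
  obtains Oc where "Oc \<in> faces_at F v" "length Oc = 8" "\<And>f. f \<in> faces_at F v \<Longrightarrow> f \<noteq> Oc \<Longrightarrow> length f = 3"
proof -
  obtain Oc T1 T2 T3 T4 p c1 c2 c3 q where "faces_at F v = {Oc, T1, T2, T3, T4}" "distinct [Oc, T1, T2, T3, T4]"
    "length Oc = 8" "length T1 = 3" "length T2 = 3" "length T3 = 3" "length T4 = 3"
    "set T1 = {v, p, c1}" "set T2 = {v, c1, c2}" "set T3 = {v, c2, c3}" "set T4 = {v, c3, q}"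
    "distinct [v, p, c1, c2, c3, q]" "{e \<in> poly_edges Oc. v \<in> e} = {{v, p}, {v, q}}"
    "c1 \<notin> set Oc" "c2 \<notin> set Oc" "c3 \<notin> set Oc"
    by (rule link_at_vertex[OF assms])
  then show thesis by (intro that[of Oc]) auto
qed

lemma face_length_cases: "f \<in> F \<Longrightarrow> length f = 3 \<or> length f = 8"
proof -
  assume f: "f \<in> F"
  then have "0 < length f" using face_length[OF f] by linarith
  then have "f \<in> faces_at F (f ! 0)" using f unfolding faces_at_def by simp
  then show ?thesis using octagon_at_vertex[OF in_map_vertices[OF f nth_mem[OF \<open>0 < length f\<close>]]] by metis
qed

lemma octagon_unique:
  assumes "f \<in> F" "length f = 8" "v \<in> set f" "g \<in> F" "length g = 8" "v \<in> set g"
  shows "f = g"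
proof -
  have "f \<in> faces_at F v" "g \<in> faces_at F v" using assms unfolding faces_at_def by auto
  then show "f = g"
    using octagon_at_vertex[OF in_map_vertices[OF assms(1,3)]] assms(2,5) by (metis numeral_eq_iff semiring_norm(85) semiring_norm(88))
qed

definition octagon_at :: "'a \<Rightarrow> 'a list" where
  "octagon_at v = (SOME f. f \<in> F \<and> length f = 8 \<and> v \<in> set f)"

definition octagon_edge :: "'a \<Rightarrow> 'a \<Rightarrow> bool" where
  "octagon_edge a b \<longleftrightarrow> (\<exists>f\<in>F. length f = 8 \<and> {a, b} \<in> poly_edges f)"

definition triangle :: "'a \<Rightarrow> 'a \<Rightarrow> 'a \<Rightarrow> bool" where
  "triangle a b c \<longleftrightarrow> (\<exists>f\<in>F. length f = 3 \<and> set f = {a, b, c})"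

lemma octagon_at:
  assumes "v \<in> map_vertices F"
  shows "octagon_at v \<in> F" "length (octagon_at v) = 8" "v \<in> set (octagon_at v)"
proof -
  obtain Oc where "Oc \<in> faces_at F v" "length Oc = 8" using octagon_at_vertex[OF assms] by blast
  then have "\<exists>f. f \<in> F \<and> length f = 8 \<and> v \<in> set f" unfolding faces_at_def by blast
  then have "octagon_at v \<in> F \<and> length (octagon_at v) = 8 \<and> v \<in> set (octagon_at v)"
    unfolding octagon_at_def by (rule someI_ex)
  then show "octagon_at v \<in> F" "length (octagon_at v) = 8" "v \<in> set (octagon_at v)" by simp_all
qed

lemma octagon_at_eq: "f \<in> F \<Longrightarrow> length f = 8 \<Longrightarrow> v \<in> set f \<Longrightarrow> octagon_at v = f"
  using octagon_at[OF in_map_vertices] octagon_unique by metis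

lemma link_3_4_8_at_vertex:
  assumes v: "v \<in> map_vertices F"
  shows "\<exists>p c1 c2 c3 q. link_3_4_8 octagon_edge triangle octagon_at v p c1 c2 c3 q"
proof -
  obtain Oc T1 T2 T3 T4 p c1 c2 c3 q where faces: "faces_at F v = {Oc, T1, T2, T3, T4}"
    and "distinct [Oc, T1, T2, T3, T4]"
    and len: "length Oc = 8" "length T1 = 3" "length T2 = 3" "length T3 = 3" "length T4 = 3"
    and T: "set T1 = {v, p, c1}" "set T2 = {v, c1, c2}" "set T3 = {v, c2, c3}" "set T4 = {v, c3, q}"
    and D: "distinct [v, p, c1, c2, c3, q]" and Oc: "{e \<in> poly_edges Oc. v \<in> e} = {{v, p}, {v, q}}"
    and c_out: "c1 \<notin> set Oc" "c2 \<notin> set Oc" "c3 \<notin> set Oc"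
    by (rule link_at_vertex[OF v])
  have inF: "Oc \<in> F" "T1 \<in> F" "T2 \<in> F" "T3 \<in> F" "T4 \<in> F" and v_Oc: "v \<in> set Oc"
    using faces unfolding faces_at_def by blast+
  have oct_v: "octagon_at v = Oc" using octagon_at_eq[OF inF(1) len(1) v_Oc] .
  have oedge_v: "\<forall>y. octagon_edge v y \<longleftrightarrow> y = p \<or> y = q"
  proof (intro allI iffI)
    fix y assume "octagon_edge v y"
    then obtain f where f: "f \<in> F" "length f = 8" "{v, y} \<in> poly_edges f" unfolding octagon_edge_def by blast
    then have "f = Oc" using octagon_unique[OF _ _ _ inF(1) len(1) v_Oc] poly_edges_subset_set by blast
    then have "{v, y} \<in> {{v, p}, {v, q}}" using f(3) unfolding Oc[symmetric] by simp
    then show "y = p \<or> y = q" using D by (simp add: doubleton_eq_iff)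
  next
    fix y assume "y = p \<or> y = q"
    then show "octagon_edge v y" unfolding octagon_edge_def using Oc inF(1) len(1) by blast
  qed
  have d: "distinct [v, p, c1]" "distinct [v, c1, c2]" "distinct [v, c2, c3]" "distinct [v, c3, q]"
    using D by auto
  have tri_v: "\<forall>a b. triangle v a b \<longleftrightarrow> (a = p \<and> b = c1) \<or> (a = c1 \<and> b = p) \<or> (a = c1 \<and> b = c2) \<or>
      (a = c2 \<and> b = c1) \<or> (a = c2 \<and> b = c3) \<or> (a = c3 \<and> b = c2) \<or> (a = c3 \<and> b = q) \<or>
      (a = q \<and> b = c3)"
  proof (intro allI iffI)
    fix a b assume "triangle v a b"
    then obtain f where f: "f \<in> F" "length f = 3" "set f = {v, a, b}" unfolding triangle_def by blast
    have "card {v, a, b} = 3" using f distinct_card[OF face_distinct[OF f(1)]] by simp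
    then have dab: "distinct [v, a, b]" by (auto simp: card_insert_if split: if_splits)
    have "f \<in> faces_at F v" using f unfolding faces_at_def by auto
    then have "f \<in> {Oc, T1, T2, T3, T4}" using faces by simp
    then have "f = T1 \<or> f = T2 \<or> f = T3 \<or> f = T4" using len f(2) by auto
    then consider "{v, a, b} = {v, p, c1}" | "{v, a, b} = {v, c1, c2}" | "{v, a, b} = {v, c2, c3}"
      | "{v, a, b} = {v, c3, q}"
      using f(3) T by metis
    then show "(a = p \<and> b = c1) \<or> (a = c1 \<and> b = p) \<or> (a = c1 \<and> b = c2) \<or> (a = c2 \<and> b = c1) \<or>
      (a = c2 \<and> b = c3) \<or> (a = c3 \<and> b = c2) \<or> (a = c3 \<and> b = q) \<or> (a = q \<and> b = c3)"
    proof cases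
      case 1 then show ?thesis using triple_eq_cases[OF dab d(1)] by blast
    next
      case 2 then show ?thesis using triple_eq_cases[OF dab d(2)] by blast
    next
      case 3 then show ?thesis using triple_eq_cases[OF dab d(3)] by blast
    next
      case 4 then show ?thesis using triple_eq_cases[OF dab d(4)] by blast
    qed
  next
    fix a b
    have "triangle v y z" "triangle v z y" if "T \<in> F" "length T = 3" "set T = {v, y, z}" for T y z
      using that unfolding triangle_def by (metis insert_commute)+
    note this[OF inF(2) len(2) T(1)] this[OF inF(3) len(3) T(2)] this[OF inF(4) len(4) T(3)]
      this[OF inF(5) len(5) T(4)]
    then show "(a = p \<and> b = c1) \<or> (a = c1 \<and> b = p) \<or> (a = c1 \<and> b = c2) \<or> (a = c2 \<and> b = c1) \<or>
      (a = c2 \<and> b = c3) \<or> (a = c3 \<and> b = c2) \<or> (a = c3 \<and> b = q) \<or> (a = q \<and> b = c3) \<Longrightarrow> triangle v a b"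
      by (elim disjE conjE) simp_all
  qed
  have off: "octagon_at c \<noteq> octagon_at v" if "c \<in> set T" "T \<in> F" "c \<notin> set Oc" for c T
    using octagon_at(3)[OF in_map_vertices[OF that(2,1)]] oct_v that(3) by auto
  have "octagon_at c1 \<noteq> octagon_at v" "octagon_at c2 \<noteq> octagon_at v" "octagon_at c3 \<noteq> octagon_at v"
    using off[OF _ inF(2) c_out(1)] off[OF _ inF(3) c_out(2)] off[OF _ inF(4) c_out(3)] T by simp_all
  then show ?thesis unfolding link_3_4_8_def using D oedge_v tri_v by blast
qed

sublocale links_3_4_8 "map_vertices F" octagon_at octagon_edge triangle
proof unfold_locales
  fix a b c assume "triangle a b c"
  then show "triangle b a c" "triangle a c b" unfolding triangle_def by (metis insert_commute)+
next
  fix a b assume "octagon_edge a b"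
  then show "octagon_edge b a" unfolding octagon_edge_def by (metis insert_commute)
next
  fix a b assume "octagon_edge a b"
  then obtain f where f: "f \<in> F" "length f = 8" "{a, b} \<in> poly_edges f" unfolding octagon_edge_def by blast
  then have "a \<in> set f" "b \<in> set f" using poly_edges_subset_set by blast+
  then show "octagon_at a = octagon_at b" and "a \<in> map_vertices F"
    using octagon_at_eq f in_map_vertices by metis+
next
  fix a b c assume "triangle a b c"
  then show "a \<in> map_vertices F" unfolding triangle_def using in_map_vertices by fastforce
next
  fix v assume v: "v \<in> map_vertices F"
  show "\<exists>p c1 c2 c3 q. link_3_4_8 octagon_edge triangle octagon_at v p c1 c2 c3 q"
    by (rule link_3_4_8_at_vertex[OF v])
  show "v \<in> set (octagon_at v) \<and> distinct (octagon_at v) \<and> length (octagon_at v) = 8"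
    using octagon_at[OF v] face_distinct by blast
  fix y assume "y \<in> set (octagon_at v)"
  then show "y \<in> map_vertices F \<and> octagon_at y = octagon_at v"
    using in_map_vertices octagon_at_eq octagon_at[OF v] by metis
next
  fix v :: 'a and i :: nat assume v: "v \<in> map_vertices F" and i: "i < 8"
  have "{octagon_at v ! i, octagon_at v ! (Suc i mod length (octagon_at v))} \<in> poly_edges (octagon_at v)"
    using i octagon_at(2)[OF v] by (intro nth_edge_in_poly_edges) simp
  then show "octagon_edge (octagon_at v ! i) (octagon_at v ! ((i + 1) mod 8))"
    unfolding octagon_edge_def using octagon_at[OF v] by auto
next
  show "finite (map_vertices F)" by (rule finite_map_vertices)
  obtain f where f: "f \<in> F" using polyhedral unfolding polyhedral_map_def by blast
  then have "0 < length f" using face_length[OF f] by linarith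
  then show "map_vertices F \<noteq> {}" using in_map_vertices[OF f nth_mem] by blast
qed


lemma card_map_vertices: "card (map_vertices F) = 8 * card {f \<in> F. length f = 8}"
proof -
  let ?O = "{f \<in> F. length f = 8}"
  have "map_vertices F = (\<Union>f\<in>?O. set f)"
    using octagon_at in_map_vertices by blast
  moreover have "card (\<Union>f\<in>?O. set f) = (\<Sum>f\<in>?O. card (set f))"
  proof (rule card_UN_disjoint)
    show "\<forall>f\<in>?O. \<forall>g\<in>?O. f \<noteq> g \<longrightarrow> set f \<inter> set g = {}" using octagon_unique by blast
  qed (use finite_faces in auto)
  moreover have "(\<Sum>f\<in>?O. card (set f)) = (\<Sum>f\<in>?O. 8)"
    by (rule sum.cong) (auto simp: distinct_card[OF face_distinct])
  ultimately show ?thesis by simp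
qed

lemma card_triangles_at_vertex:
  assumes "v \<in> map_vertices F"
  shows "card {f \<in> {f \<in> F. length f = 3}. v \<in> set f} = 4"
proof -
  obtain Oc T1 T2 T3 T4 p c1 c2 c3 q where faces: "faces_at F v = {Oc, T1, T2, T3, T4}"
    and dist: "distinct [Oc, T1, T2, T3, T4]"
    and len: "length Oc = 8" "length T1 = 3" "length T2 = 3" "length T3 = 3" "length T4 = 3"
    and "set T1 = {v, p, c1}" "set T2 = {v, c1, c2}" "set T3 = {v, c2, c3}" "set T4 = {v, c3, q}"
    and "distinct [v, p, c1, c2, c3, q]" "{e \<in> poly_edges Oc. v \<in> e} = {{v, p}, {v, q}}"
    and "c1 \<notin> set Oc" "c2 \<notin> set Oc" "c3 \<notin> set Oc"
    by (rule link_at_vertex[OF assms])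
  have "{f \<in> {f \<in> F. length f = 3}. v \<in> set f} = {f \<in> faces_at F v. length f = 3}"
    unfolding faces_at_def by auto
  also have "\<dots> = {T1, T2, T3, T4}" unfolding faces using len by auto
  finally show ?thesis using dist by simp
qed

lemma card_triangles: "3 * card {f \<in> F. length f = 3} = 4 * card (map_vertices F)"
proof -
  let ?T = "{f \<in> F. length f = 3}"
  have "(\<Sum>f\<in>?T. card {v \<in> map_vertices F. v \<in> set f}) = (\<Sum>v\<in>map_vertices F. card {f \<in> ?T. v \<in> set f})"
    using finite_faces finite_map_vertices by (intro double_counting) simp_all
  moreover have "card {v \<in> map_vertices F. v \<in> set f} = 3" if "f \<in> ?T" for f
  proof -
    have "{v \<in> map_vertices F. v \<in> set f} = set f" using that in_map_vertices by auto
    then show ?thesis using that distinct_card[OF face_distinct] by simp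
  qed
  ultimately show ?thesis using card_triangles_at_vertex by simp
qed

text \<open>From \<open>V = 8 O\<close>, \<open>3 T = 4 V\<close>, \<open>2 E = 3 T + 8 O\<close> and \<open>F = T + O\<close>.\<close>
lemma euler_char_eq: "3 * euler_char F = - int (card {f \<in> F. length f = 8})"
proof -
  let ?T = "{f \<in> F. length f = 3}" and ?O = "{f \<in> F. length f = 8}"
  have F: "F = ?T \<union> ?O" using face_length_cases by auto
  have "card F = card ?T + card ?O"
    by (subst F, rule card_Un_disjoint) (use finite_faces in auto)
  moreover have "2 * card (map_edges F) = 3 * card ?T + 8 * card ?O"
  proof -
    have "(\<Sum>f\<in>F. length f) = (\<Sum>f\<in>?T. length f) + (\<Sum>f\<in>?O. length f)"
      by (subst F, rule sum.union_disjoint) (use finite_faces in auto)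
    then show ?thesis using edge_count by simp
  qed
  moreover note card_map_vertices card_triangles
  ultimately have "int (card F) = int (card ?T) + int (card ?O)"
    "2 * int (card (map_edges F)) = 3 * int (card ?T) + 8 * int (card ?O)"
    "int (card (map_vertices F)) = 8 * int (card ?O)"
    "3 * int (card ?T) = 4 * int (card (map_vertices F))"
    by simp_all
  moreover from this have "3 * int (card ?T) = 32 * int (card ?O)" "int (card (map_edges F)) = 20 * int (card ?O)"
    by linarith+
  ultimately show ?thesis unfolding euler_char_def by (simp add: algebra_simps)
qed

lemma card_octagon_at_image: "card (octagon_at ` map_vertices F) \<le> card {f \<in> F. length f = 8}"
  using finite_faces octagon_at by (intro card_mono) auto

end

theorem lemma4p1:
  fixes F :: "'a list set"
  assumes "semi_equivelar F [3,3,3,3,8]"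
  shows "euler_char F \<noteq> -1"
proof
  assume "euler_char F = -1"
  interpret semi_equivelar_3_4_8 F using assms by unfold_locales
  have "card {f \<in> F. length f = 8} = 3" using euler_char_eq \<open>euler_char F = -1\<close> by simp
  then show False using card_octagon_at_image three_lt_card_octagons by simp
qed

end
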